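(* Consider the complex polynomial optimization problem $\inf\{f(\mathbf z,\bar{\mathbf z}) : g_j(\mathbf z,\bar{\mathbf z})\ge 0,\ j\in[m]\}$ with $f,g_1,\dots,g_m$ Hermitian, and assume it is a quadratically constrained quadratic program, i.e. $\deg f\le 2$ and $1\le \deg g_j\le 2$ for all $j\in[m]$. Then, for relaxation order $d=1$ and any choice of chordal extension of the correlative sparsity pattern graph, the correlative-sparsity relaxation and the dense relaxation have the same optimal value: $\rho^{\mathrm{cs}}_1=\rho_1$.
   Context: Notation: $[n]=\{1,\dots,n\}$; $\mathbb N^n_t=\{\alpha\in\mathbb N^n:\sum_i\alpha_i\le t\}$. Let $\mathbf z=(z_1,\dots,z_n)$ be complex variables and $\bar{\mathbf z}$ their conjugates. A polynomial $p\in\mathbb C[\mathbf z,\bar{\mathbf z}]$ is written $p=\sum_{(\beta,\gamma)}p_{\beta,\gamma}\mathbf z^\beta\bar{\mathbf z}^\gamma$; its support is $\mathrm{supp}(p)=\{(\beta,\gamma)\in\mathbb N^n\times\mathbb N^n:p_{\beta,\gamma}\neq0\}$ and $\deg p=\max\{|\beta|+|\gamma|:(\beta,\gamma)\in\mathrm{supp}(p)\}$. $p$ is Hermitian if $p_{\beta,\gamma}=\overline{p_{\gamma,\beta}}$ for all $\beta,\gamma$. Set $d_j=\lceil\deg g_j/2\rceil$ for $j\in[m]$, $d_0=0$, $g_0=1$, $d_{\min}=\max\{\lceil\deg f/2\rceil,d_1,\dots,d_m\}$. Moments: $\mathbf y=(y_{\beta,\gamma})_{(\beta,\gamma)\in\mathbb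 N^n\times\mathbb N^n}$ is a complex sequence with $y_{\beta,\gamma}=\overline{y_{\gamma,\beta}}$, and $L_{\mathbf y}(p)=\sum_{(\beta,\gamma)}p_{\beta,\gamma}y_{\beta,\gamma}$. For $t\in\mathbb N$ and Hermitian $g$, the localizing matrix $\mathbf M_t(g\mathbf y)$ is the Hermitian matrix with rows and columns indexed by $\mathbb N^n_t$ whose $(\beta,\gamma)$ entry is $L_{\mathbf y}(g\,\mathbf z^\beta\bar{\mathbf z}^\gamma)=\sum_{(\beta',\gamma')}g_{\beta',\gamma'}y_{\beta+\beta',\gamma+\gamma'}$; the moment matrix is $\mathbf M_t(\mathbf y)=\mathbf M_t(1\cdot\mathbf y)$ (entries $y_{\beta,\gamma}$). $X\succeq0$ means $X$ is Hermitian positive semidefinite. Dense relaxation $(Q_d)$ for $d\ge d_{\min}$: minimize $L_{\mathbf y}(f)$ subject to $\mathbf M_d(\mathbf y)\succeq0$, $\mathbf M_{d-d_j}(g_j\mathbf y)\succeq0$ for $j\in[m]$, and $y_{\mathbf 0,\mathbf 0}=1$; its optimal value is $\rho_d$. Correlative sparsity: fix $d\ge d_{\min}$ and let $J'=\{j\in[m]:d_j=d\}$. For $\alpha\in\mathbb N^n$ let $\mathrm{supp}(\alpha)=\{i:\alpha_i\ne0\}$, and for a polynomial $p$ let $\mathrm{var}(p)=\bigcup_{(\beta,\gamma)\in\mathrm{supp}(p)}(\mathrm{supp}(\beta)\cup\mathrm{supp}(\gamma))$. The csp graph $G^{\mathrm{csp}}$ has nodes $[n]$ and an edge $\{i,i'\}$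 ($i\neq i'$) iff either (i) some $(\beta,\gamma)\in\mathrm{supp}(f)\cup\bigcup_{j\in J'}\mathrm{supp}(g_j)$ has $\{i,i'\}\subseteq\mathrm{supp}(\beta)\cup\mathrm{supp}(\gamma)$, or (ii) some $j\in[m]\setminus J'$ has $\{i,i'\}\subseteq\mathrm{var}(g_j)$. A chordal extension of a graph is a chordal graph on the same node set containing it. Let $I_1,\dots,I_p$ be the maximal cliques of a chordal extension of $G^{\mathrm{csp}}$, and let $J_1,\dots,J_p$ be pairwise disjoint sets with union $[m]\setminus J'$ such that $\mathrm{var}(g_j)\subseteq I_l$ for all $j\in J_l$. $\mathbf M_t(g\mathbf y,I_l)$ denotes the principal submatrix of $\mathbf M_t(g\mathbf y)$ with rows and columns indexed by those $\beta\in\mathbb N^n_t$ with $\mathrm{supp}(\beta)\subseteq I_l$ (and $\mathbf M_t(\mathbf y,I_l)=\mathbf M_t(1\cdot\mathbf y,I_l)$). The relaxation $(Q^{\mathrm{cs}}_d)$: minimize $L_{\mathbf y}(f)$ subject to $\mathbf M_d(\mathbf y,I_l)\succeq0$ for $l\in[p]$, $\mathbf M_{d-d_j}(g_j\mathbf y,I_l)\succeq0$ for $j\in J_l$, $l\in[p]$, $L_{\mathbf y}(g_j)\ge0$ for $j\in J'$, and $y_{\mathbf 0,\mathbf 0}=1$; its optimal value is $\rho^{\mathrm{cs}}_d$. *)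

theory Defs
  imports Complex_Main "HOL-Library.Extended_Real"
begin

text \<open>Variables are indexed by 0..<n (the paper's [n] shifted by one).
  A multi-index is a function nat => nat vanishing outside {0..<n}.
  A polynomial in z, conj z is its coefficient function on pairs of multi-indices.\<close>

type_synonym mindex = "nat \<Rightarrow> nat"
type_synonym cpoly = "mindex \<times> mindex \<Rightarrow> complex"
type_synonym mseq = "mindex \<times> mindex \<Rightarrow> complex"

definition mi_on :: "nat \<Rightarrow> mindex \<Rightarrow> bool" where
  "mi_on n \<alpha> \<longleftrightarrow> (\<forall>i\<ge>n. \<alpha> i = 0)"

definition mdeg :: "nat \<Rightarrow> mindex \<Rightarrow> nat" where
  "mdeg n \<alpha> = (\<Sum>i<n. \<alpha> i)"

definition msupp :: "mindex \<Rightarrow> nat set" where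
  "msupp \<alpha> = {i. \<alpha> i \<noteq> 0}"

definition psupp :: "cpoly \<Rightarrow> (mindex \<times> mindex) set" where
  "psupp p = {bg. p bg \<noteq> 0}"

definition is_cpoly :: "nat \<Rightarrow> cpoly \<Rightarrow> bool" where
  "is_cpoly n p \<longleftrightarrow> finite (psupp p) \<and> (\<forall>(b, c)\<in>psupp p. mi_on n b \<and> mi_on n c)"

definition hermitian_poly :: "cpoly \<Rightarrow> bool" where
  "hermitian_poly p \<longleftrightarrow> (\<forall>b c. p (b, c) = cnj (p (c, b)))"

definition pdeg :: "nat \<Rightarrow> cpoly \<Rightarrow> nat" where
  "pdeg n p = Max (insert 0 {mdeg n b + mdeg n c | b c. (b, c) \<in> psupp p})"

definition half_deg :: "nat \<Rightarrow> cpoly \<Rightarrow> nat" where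
  "half_deg n p = (pdeg n p + 1) div 2"

definition pvar :: "cpoly \<Rightarrow> nat set" where
  "pvar p = (\<Union>(b, c)\<in>psupp p. msupp b \<union> msupp c)"

definition one_poly :: cpoly where
  "one_poly = (\<lambda>(b, c). if b = (\<lambda>_. 0) \<and> c = (\<lambda>_. 0) then 1 else 0)"

definition hermitian_seq :: "mseq \<Rightarrow> bool" where
  "hermitian_seq y \<longleftrightarrow> (\<forall>b c. y (b, c) = cnj (y (c, b)))"

definition Lfun :: "mseq \<Rightarrow> cpoly \<Rightarrow> complex" where
  "Lfun y p = (\<Sum>(b, c)\<in>psupp p. p (b, c) * y (b, c))"

text \<open>(beta,gamma) entry of the localizing matrix: L_y(g z^beta conj(z)^gamma)\<close>
definition loc_entry :: "mseq \<Rightarrow> cpoly \<Rightarrow> mindex \<Rightarrow> mindex \<Rightarrow> complex" where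
  "loc_entry y g b c = (\<Sum>(b', c')\<in>psupp g. g (b', c') * y (\<lambda>i. b i + b' i, \<lambda>i. c i + c' i))"

definition mono_idx :: "nat \<Rightarrow> nat \<Rightarrow> nat set \<Rightarrow> mindex set" where
  "mono_idx n t I = {\<alpha>. mi_on n \<alpha> \<and> mdeg n \<alpha> \<le> t \<and> msupp \<alpha> \<subseteq> I}"

definition psd_on :: "'a set \<Rightarrow> ('a \<Rightarrow> 'a \<Rightarrow> complex) \<Rightarrow> bool" where
  "psd_on S M \<longleftrightarrow> (\<forall>a\<in>S. \<forall>b\<in>S. M a b = cnj (M b a)) \<and>
     (\<forall>v. 0 \<le> Re (\<Sum>a\<in>S. \<Sum>b\<in>S. cnj (v a) * M a b * v b))"

definition loc_psd :: "nat \<Rightarrow> nat \<Rightarrow> nat set \<Rightarrow> cpoly \<Rightarrow> mseq \<Rightarrow> bool" where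
  "loc_psd n t I g y \<longleftrightarrow> psd_on (mono_idx n t I) (\<lambda>b c. loc_entry y g b c)"

definition zero_mi :: mindex where "zero_mi = (\<lambda>_. 0)"

definition dense_feasible :: "nat \<Rightarrow> cpoly \<Rightarrow> (nat \<Rightarrow> cpoly) \<Rightarrow> nat \<Rightarrow> nat \<Rightarrow> mseq \<Rightarrow> bool" where
  "dense_feasible n f g m d y \<longleftrightarrow> hermitian_seq y \<and> y (zero_mi, zero_mi) = 1 \<and>
     loc_psd n d {..<n} one_poly y \<and>
     (\<forall>j\<in>{1..m}. loc_psd n (d - half_deg n (g j)) {..<n} (g j) y)"

definition rho_dense :: "nat \<Rightarrow> cpoly \<Rightarrow> (nat \<Rightarrow> cpoly) \<Rightarrow> nat \<Rightarrow> nat \<Rightarrow> ereal" where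
  "rho_dense n f g m d = Inf {ereal (Re (Lfun y f)) | y. dense_feasible n f g m d y}"

definition Jprime :: "nat \<Rightarrow> (nat \<Rightarrow> cpoly) \<Rightarrow> nat \<Rightarrow> nat \<Rightarrow> nat set" where
  "Jprime n g m d = {j\<in>{1..m}. half_deg n (g j) = d}"

definition csp_graph :: "nat \<Rightarrow> cpoly \<Rightarrow> (nat \<Rightarrow> cpoly) \<Rightarrow> nat \<Rightarrow> nat \<Rightarrow> nat \<Rightarrow> nat \<Rightarrow> bool" where
  "csp_graph n f g m d i i' \<longleftrightarrow> i \<noteq> i' \<and> i < n \<and> i' < n \<and>
     ((\<exists>(b, c)\<in>psupp f \<union> (\<Union>j\<in>Jprime n g m d. psupp (g j)). {i, i'} \<subseteq> msupp b \<union> msupp c) \<or>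
      (\<exists>j\<in>{1..m} - Jprime n g m d. {i, i'} \<subseteq> pvar (g j)))"

definition is_graph :: "nat \<Rightarrow> (nat \<Rightarrow> nat \<Rightarrow> bool) \<Rightarrow> bool" where
  "is_graph n E \<longleftrightarrow> (\<forall>i j. E i j \<longrightarrow> i < n \<and> j < n \<and> i \<noteq> j \<and> E j i)"

definition chordal :: "nat \<Rightarrow> (nat \<Rightarrow> nat \<Rightarrow> bool) \<Rightarrow> bool" where
  "chordal n E \<longleftrightarrow> (\<forall>vs. distinct vs \<and> length vs \<ge> 4 \<and> set vs \<subseteq> {..<n} \<and>
       (\<forall>k<length vs. E (vs ! k) (vs ! ((k + 1) mod length vs))) \<longrightarrow>
       (\<exists>k l. k < length vs \<and> l < length vs \<and> k \<noteq> l \<and>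
          l \<noteq> (k + 1) mod length vs \<and> k \<noteq> (l + 1) mod length vs \<and> E (vs ! k) (vs ! l)))"

definition chordal_extension :: "nat \<Rightarrow> (nat \<Rightarrow> nat \<Rightarrow> bool) \<Rightarrow> (nat \<Rightarrow> nat \<Rightarrow> bool) \<Rightarrow> bool" where
  "chordal_extension n G H \<longleftrightarrow> is_graph n H \<and> (\<forall>i j. G i j \<longrightarrow> H i j) \<and> chordal n H"

definition is_clique :: "nat \<Rightarrow> (nat \<Rightarrow> nat \<Rightarrow> bool) \<Rightarrow> nat set \<Rightarrow> bool" where
  "is_clique n H C \<longleftrightarrow> C \<subseteq> {..<n} \<and> (\<forall>i\<in>C. \<forall>j\<in>C. i \<noteq> j \<longrightarrow> H i j)"

definition max_cliques :: "nat \<Rightarrow> (nat \<Rightarrow> nat \<Rightarrow> bool) \<Rightarrow> nat set set" where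
  "max_cliques n H = {C. is_clique n H C \<and> (\<forall>C'. is_clique n H C' \<and> C \<subseteq> C' \<longrightarrow> C' = C)}"

text \<open>The sets J_l are encoded by an assignment asg mapping each j in [m] - J' to the clique I_l
  with j in J_l.\<close>
definition valid_assignment :: "nat \<Rightarrow> (nat \<Rightarrow> cpoly) \<Rightarrow> nat \<Rightarrow> nat \<Rightarrow> (nat \<Rightarrow> nat \<Rightarrow> bool) \<Rightarrow> (nat \<Rightarrow> nat set) \<Rightarrow> bool" where
  "valid_assignment n g m d H asg \<longleftrightarrow>
     (\<forall>j\<in>{1..m} - Jprime n g m d. asg j \<in> max_cliques n H \<and> pvar (g j) \<subseteq> asg j)"

definition cs_feasible :: "nat \<Rightarrow> cpoly \<Rightarrow> (nat \<Rightarrow> cpoly) \<Rightarrow> nat \<Rightarrow> nat \<Rightarrow> (nat \<Rightarrow> nat \<Rightarrow> bool) \<Rightarrow> (nat \<Rightarrow> nat set) \<Rightarrow> mseq \<Rightarrow> bool" where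
  "cs_feasible n f g m d H asg y \<longleftrightarrow> hermitian_seq y \<and> y (zero_mi, zero_mi) = 1 \<and>
     (\<forall>I\<in>max_cliques n H. loc_psd n d I one_poly y) \<and>
     (\<forall>j\<in>{1..m} - Jprime n g m d. loc_psd n (d - half_deg n (g j)) (asg j) (g j) y) \<and>
     (\<forall>j\<in>Jprime n g m d. Im (Lfun y (g j)) = 0 \<and> 0 \<le> Re (Lfun y (g j)))"

definition rho_cs :: "nat \<Rightarrow> cpoly \<Rightarrow> (nat \<Rightarrow> cpoly) \<Rightarrow> nat \<Rightarrow> nat \<Rightarrow> (nat \<Rightarrow> nat \<Rightarrow> bool) \<Rightarrow> (nat \<Rightarrow> nat set) \<Rightarrow> ereal" where
  "rho_cs n f g m d H asg = Inf {ereal (Re (Lfun y f)) | y. cs_feasible n f g m d H asg y}"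

end

(*
  Both relaxations constrain, apart from y(0,0) = 1, only the first-order moment matrix M_1(y),
  whose rows are indexed by the monomials 1, z_1, ..., z_n: the degree bounds force d_j = 1, so
  every g_j enters both relaxations as the scalar condition L_y(g_j) >= 0.  A feasible point of
  the sparse relaxation thus fixes M_1(y) only on the pattern of the chordal graph H with the row
  of 1 joined to all rows, and is positive semidefinite on every clique of this pattern, which is
  again chordal.  By the completion theorem of Grone, Johnson, Sa and Wolkowicz the fixed entries
  extend to a positive semidefinite matrix.  Replacing the free moments by this completion changes
  neither L_y(f) nor the L_y(g_j), because every monomial in their supports lies on an edge of H.

  The completion theorem is proved by removing a simplicial vertex, which exists by Dirac's lemma,
  and extending a positive semidefinite matrix by one row and column: the new column is taken in
  the range of the block of the neighbours, which exists by elimination with Schur complements.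
*)

theory Submission
  imports Defs
begin

section \<open>Positive semidefinite matrices on finite index sets\<close>

definition quad_form :: "'a set \<Rightarrow> ('a \<Rightarrow> 'a \<Rightarrow> complex) \<Rightarrow> ('a \<Rightarrow> complex) \<Rightarrow> complex" where
  "quad_form S M v = (\<Sum>a\<in>S. \<Sum>b\<in>S. cnj (v a) * M a b * v b)"

lemma psd_on_iff:
  "psd_on S M \<longleftrightarrow> (\<forall>a\<in>S. \<forall>b\<in>S. M a b = cnj (M b a)) \<and> (\<forall>v. 0 \<le> Re (quad_form S M v))"
  unfolding psd_on_def quad_form_def ..

lemma psd_on_hermitian: "psd_on S M \<Longrightarrow> a \<in> S \<Longrightarrow> b \<in> S \<Longrightarrow> M a b = cnj (M b a)"
  unfolding psd_on_iff by blast

lemma psd_on_quad_form_nonneg: "psd_on S M \<Longrightarrow> 0 \<le> Re (quad_form S M v)"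
  unfolding psd_on_iff by blast

lemma psd_on_cong:
  "(\<And>a b. a \<in> S \<Longrightarrow> b \<in> S \<Longrightarrow> M a b = M' a b) \<Longrightarrow> psd_on S M \<longleftrightarrow> psd_on S M'"
  unfolding psd_on_def by (simp cong: sum.cong)

lemma sum_if_mem_subset:
  "finite S \<Longrightarrow> T \<subseteq> S \<Longrightarrow> (\<Sum>x\<in>S. if x \<in> T then g x else 0) = sum g T"
  using sum.inter_restrict[of S g T] by (simp add: Int_absorb1)

lemma quad_form_zero_extension:
  assumes "finite S" "T \<subseteq> S"
  shows "quad_form S M (\<lambda>a. if a \<in> T then v a else 0) = quad_form T M v"
proof -
  have "(\<Sum>b\<in>S. cnj (if a \<in> T then v a else 0) * M a b * (if b \<in> T then v b else 0)) =
      (if a \<in> T then \<Sum>b\<in>T. cnj (v a) * M a b * v b else 0)" for a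
    using sum_if_mem_subset[OF assms, of "\<lambda>b. cnj (v a) * M a b * v b"]
    by (cases "a \<in> T") (simp_all add: if_distrib[of "times _"] cong: if_cong)
  then show ?thesis
    using sum_if_mem_subset[OF assms] by (simp add: quad_form_def)
qed

lemma psd_on_subset:
  assumes "psd_on S M" "finite S" "T \<subseteq> S"
  shows "psd_on T M"
  unfolding psd_on_iff
proof (intro conjI allI ballI)
  show "M a b = cnj (M b a)" if "a \<in> T" "b \<in> T" for a b
    using psd_on_hermitian[OF assms(1)] that assms(3) by blast
  show "0 \<le> Re (quad_form T M v)" for v
    using psd_on_quad_form_nonneg[OF assms(1), of "\<lambda>a. if a \<in> T then v a else 0"]
    by (simp add: quad_form_zero_extension assms(2,3))
qed

lemma psd_on_diag:
  assumes "psd_on S M" "finite S" "k \<in> S"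
  shows "Im (M k k) = 0" "0 \<le> Re (M k k)"
proof -
  show "Im (M k k) = 0"
    using psd_on_hermitian[OF assms(1,3,3)] by (metis cnj.sel(2) minus_equation_iff neg_equal_zero)
  have "psd_on {k} M"
    using psd_on_subset assms by blast
  from psd_on_quad_form_nonneg[OF this, of "\<lambda>_. 1"] show "0 \<le> Re (M k k)"
    by (simp add: quad_form_def)
qed

lemma quad_form_insert:
  assumes "finite X" "s \<notin> X"
  shows "quad_form (insert s X) A v = cnj (v s) * A s s * v s
    + cnj (v s) * (\<Sum>b\<in>X. A s b * v b) + (\<Sum>a\<in>X. cnj (v a) * A a s) * v s + quad_form X A v"
  using assms by (simp add: quad_form_def sum.distrib sum_distrib_left sum_distrib_right mult.assoc)

lemma quad_form_shift:
  "quad_form X M (\<lambda>a. v a + t * \<alpha> a) = quad_form X M v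
    + t * (\<Sum>a\<in>X. \<Sum>b\<in>X. cnj (v a) * M a b * \<alpha> b)
    + cnj t * (\<Sum>a\<in>X. \<Sum>b\<in>X. cnj (\<alpha> a) * M a b * v b) + cnj t * t * quad_form X M \<alpha>"
proof -
  have "quad_form X M (\<lambda>a. v a + t * \<alpha> a) = (\<Sum>a\<in>X. \<Sum>b\<in>X. cnj (v a) * M a b * v b
      + t * (cnj (v a) * M a b * \<alpha> b) + cnj t * (cnj (\<alpha> a) * M a b * v b)
      + cnj t * t * (cnj (\<alpha> a) * M a b * \<alpha> b))"
    unfolding quad_form_def by (intro sum.cong refl) (simp add: algebra_simps)
  then show ?thesis
    by (simp add: quad_form_def sum.distrib sum_distrib_left)
qed

lemma quad_form_bordered:
  assumes fin: "finite X" and s: "s \<notin> X"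
    and herm: "\<forall>a\<in>X. \<forall>b\<in>X. M a b = cnj (M b a)"
    and A_X: "\<forall>a\<in>X. \<forall>b\<in>X. A a b = M a b"
    and A_col: "\<forall>a\<in>X. A a s = (\<Sum>k\<in>X. M a k * \<alpha> k)"
    and A_row: "\<forall>b\<in>X. A s b = cnj (A b s)"
  shows "quad_form (insert s X) A v =
    quad_form X M (\<lambda>a. v a + v s * \<alpha> a) + cnj (v s) * v s * (A s s - quad_form X M \<alpha>)"
proof -
  have "A s b = (\<Sum>a\<in>X. cnj (\<alpha> a) * M a b)" if "b \<in> X" for b
  proof -
    have "A s b = (\<Sum>a\<in>X. cnj (M b a) * cnj (\<alpha> a))"
      using that A_row A_col by simp
    also have "\<dots> = (\<Sum>a\<in>X. cnj (\<alpha> a) * M a b)"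
      using that herm by (intro sum.cong refl) (metis mult.commute)
    finally show ?thesis .
  qed
  then have "(\<Sum>b\<in>X. A s b * v b) = (\<Sum>b\<in>X. \<Sum>a\<in>X. cnj (\<alpha> a) * M a b * v b)"
    by (simp add: sum_distrib_right)
  also have "\<dots> = (\<Sum>a\<in>X. \<Sum>b\<in>X. cnj (\<alpha> a) * M a b * v b)"
    by (rule sum.swap)
  finally have row: "(\<Sum>b\<in>X. A s b * v b) = (\<Sum>a\<in>X. \<Sum>b\<in>X. cnj (\<alpha> a) * M a b * v b)" .
  have col: "(\<Sum>a\<in>X. cnj (v a) * A a s) = (\<Sum>a\<in>X. \<Sum>b\<in>X. cnj (v a) * M a b * \<alpha> b)"
    using A_col by (simp add: sum_distrib_left mult.assoc)
  have "quad_form X A v = quad_form X M v"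
    using A_X by (simp add: quad_form_def)
  then show ?thesis
    unfolding quad_form_insert[OF fin s] quad_form_shift row col by (simp add: algebra_simps)
qed

lemma psd_on_bordered:
  assumes fin: "finite X" and s: "s \<notin> X" and M: "psd_on X M"
    and A_X: "\<forall>a\<in>X. \<forall>b\<in>X. A a b = M a b"
    and A_col: "\<forall>a\<in>X. A a s = (\<Sum>k\<in>X. M a k * \<alpha> k)"
    and A_row: "\<forall>b\<in>X. A s b = cnj (A b s)"
    and corner_real: "Im (A s s) = 0"
    and corner_bound: "Re (quad_form X M \<alpha>) \<le> Re (A s s)"
  shows "psd_on (insert s X) A"
  unfolding psd_on_iff
proof (intro conjI allI ballI)
  have herm: "\<forall>a\<in>X. \<forall>b\<in>X. M a b = cnj (M b a)"
    using psd_on_hermitian[OF M] by blast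
  show "A a b = cnj (A b a)" if ab: "a \<in> insert s X" "b \<in> insert s X" for a b
  proof -
    consider "a = s" "b = s" | "a = s" "b \<in> X" | "a \<in> X" "b = s" | "a \<in> X" "b \<in> X"
      using ab by blast
    then show ?thesis
    proof cases
      case 1
      then show ?thesis using corner_real by (simp add: complex_eq_iff)
    next
      case 2
      then show ?thesis using A_row by simp
    next
      case 3
      then show ?thesis using A_row by simp
    next
      case 4
      then show ?thesis using A_X herm by metis
    qed
  qed
  show "0 \<le> Re (quad_form (insert s X) A v)" for v
  proof -
    have "cnj (v s) * v s = complex_of_real ((cmod (v s))\<^sup>2)"
      using complex_norm_square[of "v s"] by (simp add: mult.commute)
    then have "Re (cnj (v s) * v s * (A s s - quad_form X M \<alpha>)) =
        (cmod (v s))\<^sup>2 * Re (A s s - quad_form X M \<alpha>)"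
      by simp
    also have "\<dots> \<ge> 0"
      using corner_bound by simp
    finally show ?thesis
      using quad_form_bordered[OF fin s herm A_X A_col A_row]
        psd_on_quad_form_nonneg[OF M] by simp
  qed
qed

lemma psd_on_zero_diag:
  assumes M: "psd_on S M" and fin: "finite S" and k: "k \<in> S" and j: "j \<in> S"
    and zero: "M k k = 0"
  shows "M k j = 0"
proof (rule ccontr)
  assume ne: "M k j \<noteq> 0"
  then have "k \<noteq> j"
    using zero by auto
  have M_jk: "M j k = cnj (M k j)"
    using psd_on_hermitian[OF M j k] .
  have "psd_on {k, j} M"
    using psd_on_subset[OF M fin] k j by simp
  define t where "t = (Re (M j j) + 1) / (2 * (cmod (M k j))\<^sup>2)"
  define v where "v = (\<lambda>a. if a = k then - (of_real t * M k j) else 1)"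
  have "quad_form {k, j} M v = M j j - 2 * of_real (t * (cmod (M k j))\<^sup>2)"
    using \<open>k \<noteq> j\<close> zero M_jk cmod_power2[of "M k j"]
    by (simp add: quad_form_def v_def complex_eq_iff algebra_simps power2_eq_square)
  also have "Re \<dots> = -1"
    using ne by (simp add: t_def field_simps)
  finally show False
    using psd_on_quad_form_nonneg[OF \<open>psd_on {k, j} M\<close>, of v] by simp
qed

lemma psd_on_schur_complement:
  assumes B: "psd_on (insert k T) B" and fin: "finite T" and k: "k \<notin> T"
  shows "psd_on T (\<lambda>a b. B a b - B a k * B k b / B k k)"
proof (cases "B k k = 0")
  case True
  \<comment> \<open>Then \<open>x / 0 = 0\<close> makes the Schur complement \<open>B\<close> itself.\<close>
  then show ?thesis
    using psd_on_subset[OF B] fin by (simp add: subset_insertI)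
next
  case False
  show ?thesis
    unfolding psd_on_iff
  proof (intro conjI allI ballI)
    show "B a b - B a k * B k b / B k k = cnj (B b a - B b k * B k a / B k k)"
      if "a \<in> T" "b \<in> T" for a b
    proof -
      have "B b a = cnj (B a b)" "B b k = cnj (B k b)" "B k a = cnj (B a k)"
        using that psd_on_hermitian[OF B] by blast+
      moreover have "cnj (B k k) = B k k"
        using psd_on_diag(1)[OF B _ insertI1] fin by (simp add: complex_eq_iff)
      ultimately show ?thesis
        by (simp add: mult.commute)
    qed
  next
    fix v
    define \<rho> where "\<rho> = (\<Sum>b\<in>T. B k b * v b)"
    define \<sigma> where "\<sigma> = (\<Sum>a\<in>T. cnj (v a) * B a k)"
    define w where "w = v(k := - \<rho> / B k k)"
    have "quad_form T (\<lambda>a b. B a b - B a k * B k b / B k k) v = quad_form T B v - \<sigma> * \<rho> / B k k"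
      by (simp add: quad_form_def \<rho>_def \<sigma>_def algebra_simps sum_subtractf sum_distrib_left
          sum_distrib_right sum_divide_distrib)
    also have "\<dots> = quad_form (insert k T) B w"
    proof -
      have "w a = v a" if "a \<in> T" for a
        using that k by (auto simp: w_def)
      then have "quad_form T B w = quad_form T B v" "(\<Sum>b\<in>T. B k b * w b) = \<rho>"
          "(\<Sum>a\<in>T. cnj (w a) * B a k) = \<sigma>"
        by (simp_all add: quad_form_def \<rho>_def \<sigma>_def)
      then show ?thesis
        using False by (simp add: quad_form_insert[OF fin k] w_def field_simps)
    qed
    finally show "0 \<le> Re (quad_form T (\<lambda>a b. B a b - B a k * B k b / B k k) v)"
      using psd_on_quad_form_nonneg[OF B] by simp
  qed
qed

lemma psd_on_column_in_range:
  assumes "finite K" "s \<notin> K" "psd_on (insert s K) B"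
  shows "\<exists>\<alpha>. \<forall>k\<in>K. (\<Sum>k'\<in>K. B k k' * \<alpha> k') = B k s"
  using assms
proof (induction K arbitrary: B rule: finite_induct)
  case empty
  then show ?case by simp
next
  case (insert k0 K B)
  \<comment> \<open>Eliminate \<open>k0\<close> through the Schur complement. A zero pivot \<open>d\<close> forces row \<open>k0\<close> to vanish,
    and then the value of the solution at \<open>k0\<close> is irrelevant.\<close>
  define d where "d = B k0 k0"
  define B' where "B' = (\<lambda>a b. B a b - B a k0 * B k0 b / d)"
  have "psd_on (insert k0 (insert s K)) B" "k0 \<notin> insert s K"
    using insert by (auto simp: insert_commute)
  from psd_on_schur_complement[OF this(1) _ this(2)] have "psd_on (insert s K) B'"
    using insert.hyps(1) by (simp add: B'_def d_def)
  then obtain \<alpha> where \<alpha>: "\<forall>k\<in>K. (\<Sum>k'\<in>K. B' k k' * \<alpha> k') = B' k s"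
    using insert.IH insert.prems by blast
  define \<sigma> where "\<sigma> = (\<Sum>k'\<in>K. B k0 k' * \<alpha> k')"
  define \<alpha>' where "\<alpha>' = \<alpha>(k0 := (B k0 s - \<sigma>) / d)"
  have sum_\<alpha>': "(\<Sum>k'\<in>insert k0 K. B k k' * \<alpha>' k') = B k k0 * ((B k0 s - \<sigma>) / d) + (\<Sum>k'\<in>K. B k k' * \<alpha> k')"
    for k
  proof -
    have "(\<Sum>k'\<in>K. B k k' * \<alpha>' k') = (\<Sum>k'\<in>K. B k k' * \<alpha> k')"
      using insert.hyps(2) by (intro sum.cong) (auto simp: \<alpha>'_def)
    then show ?thesis
      using insert.hyps by (simp add: \<alpha>'_def)
  qed
  show ?case
  proof (intro exI ballI)
    fix k assume "k \<in> insert k0 K"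
    then consider "k = k0" | "k \<in> K" by blast
    then show "(\<Sum>k'\<in>insert k0 K. B k k' * \<alpha>' k') = B k s"
    proof cases
      case 1
      show ?thesis
      proof (cases "d = 0")
        case True
        have "B k0 k' = 0" if "k' \<in> insert s (insert k0 K)" for k'
          using psd_on_zero_diag[OF insert.prems(2) _ _ that] insert.hyps True d_def by simp
        then show ?thesis
          using 1 True by (simp add: sum_\<alpha>' \<sigma>_def)
      next
        case False
        then show ?thesis
          using 1 by (simp add: sum_\<alpha>' \<sigma>_def[symmetric] d_def[symmetric])
      qed
    next
      case 2
      have "(\<Sum>k'\<in>K. B k k' * \<alpha> k') = (\<Sum>k'\<in>K. B' k k' * \<alpha> k' + B k k0 / d * (B k0 k' * \<alpha> k'))"
        by (intro sum.cong refl) (simp add: B'_def algebra_simps)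
      also have "\<dots> = B' k s + B k k0 / d * \<sigma>"
        using \<alpha> 2 by (simp add: sum.distrib sum_distrib_left \<sigma>_def)
      finally show ?thesis
        unfolding sum_\<alpha>' by (simp add: B'_def algebra_simps diff_divide_distrib)
    qed
  qed
qed

lemma psd_on_corner_bound:
  assumes fin: "finite K" and s: "s \<notin> K" and B: "psd_on (insert s K) B"
    and \<alpha>: "\<forall>k\<in>K. (\<Sum>k'\<in>K. B k k' * \<alpha> k') = B k s"
  shows "Re (quad_form K B \<alpha>) \<le> Re (B s s)"
proof -
  have B_herm: "\<forall>a\<in>K. \<forall>b\<in>K. B a b = cnj (B b a)"
    and B_row: "\<forall>b\<in>K. B s b = cnj (B b s)"
    using psd_on_hermitian[OF B] by blast+
  have B_col: "\<forall>a\<in>K. B a s = (\<Sum>k\<in>K. B a k * \<alpha> k)"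
    using \<alpha> by simp
  define w where "w a = (if a = s then 1 else - \<alpha> a)" for a
  have "quad_form (insert s K) B w =
      quad_form K B (\<lambda>a. w a + \<alpha> a) + (B s s - quad_form K B \<alpha>)"
    using quad_form_bordered[OF fin s B_herm _ B_col B_row] by (simp add: w_def)
  also have "quad_form K B (\<lambda>a. w a + \<alpha> a) = 0"
    using s by (auto simp: quad_form_def w_def intro!: sum.neutral)
  finally show ?thesis
    using psd_on_quad_form_nonneg[OF B, of w] by simp
qed

lemma psd_on_extend_vertex:
  assumes fin: "finite X" and s: "s \<notin> X" and KX: "K \<subseteq> X"
    and M: "psd_on X M" and B: "psd_on (insert s K) B"
    and agree: "\<forall>a\<in>K. \<forall>b\<in>K. M a b = B a b"
  obtains A where "psd_on (insert s X) A" "\<forall>a\<in>X. \<forall>b\<in>X. A a b = M a b"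
    "\<forall>a\<in>insert s K. \<forall>b\<in>insert s K. A a b = B a b"
proof -
  have finK: "finite K" and sK: "s \<notin> K"
    using fin s KX finite_subset by blast+
  obtain \<alpha> where \<alpha>: "\<forall>k\<in>K. (\<Sum>k'\<in>K. B k k' * \<alpha> k') = B k s"
    using psd_on_column_in_range[OF finK sK B] by blast
  define \<alpha>' where "\<alpha>' a = (if a \<in> K then \<alpha> a else 0)" for a
  define col where "col a = (\<Sum>k\<in>X. M a k * \<alpha>' k)" for a
  define A where "A a b = (if a = s then if b = s then B s s else cnj (col b)
      else if b = s then col a else M a b)" for a b
  have col_K: "col a = (\<Sum>k\<in>K. M a k * \<alpha> k)" for a
  proof -
    have "M a k * \<alpha>' k = (if k \<in> K then M a k * \<alpha> k else 0)" for k
      by (simp add: \<alpha>'_def)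
    then show ?thesis
      using sum_if_mem_subset[OF fin KX, of "\<lambda>k. M a k * \<alpha> k"] by (simp add: col_def)
  qed
  have col_B: "col a = B a s" if "a \<in> K" for a
    using that agree \<alpha> by (simp add: col_K)
  have B_row: "\<forall>b\<in>K. B s b = cnj (B b s)"
    using psd_on_hermitian[OF B] by blast
  have corner_bound: "Re (quad_form K B \<alpha>) \<le> Re (B s s)"
    by (rule psd_on_corner_bound[OF finK sK B \<alpha>])
  have "quad_form X M \<alpha>' = quad_form K B \<alpha>"
    using quad_form_zero_extension[OF fin KX, of M \<alpha>] agree
    by (simp add: \<alpha>'_def quad_form_def cong: sum.cong)
  moreover have A_X: "\<forall>a\<in>X. \<forall>b\<in>X. A a b = M a b"
    and A_col: "\<forall>a\<in>X. A a s = (\<Sum>k\<in>X. M a k * \<alpha>' k)"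
    and A_row: "\<forall>b\<in>X. A s b = cnj (A b s)"
    using s by (auto simp: A_def col_def)
  ultimately have "psd_on (insert s X) A"
    using psd_on_bordered[OF fin s M A_X A_col A_row] psd_on_diag(1)[OF B _ insertI1] finK
      corner_bound by (simp add: A_def[of s s])
  moreover have "A a b = B a b" if ab: "a \<in> insert s K" "b \<in> insert s K" for a b
  proof -
    consider "a = s" "b = s" | "a = s" "b \<in> K" "b \<noteq> s" | "a \<in> K" "a \<noteq> s" "b = s"
      | "a \<in> K" "b \<in> K" "a \<noteq> s" "b \<noteq> s"
      using ab sK by blast
    then show ?thesis
      by cases (simp_all add: A_def col_B B_row agree)
  qed
  ultimately show ?thesis
    using that A_X by blast
qed

section \<open>Chordal graphs\<close>

definition chordal_on :: "'a set \<Rightarrow> ('a \<Rightarrow> 'a \<Rightarrow> bool) \<Rightarrow> bool" where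
  "chordal_on V E \<longleftrightarrow> (\<forall>vs. distinct vs \<and> length vs \<ge> 4 \<and> set vs \<subseteq> V \<and>
       (\<forall>k<length vs. E (vs ! k) (vs ! ((k + 1) mod length vs))) \<longrightarrow>
       (\<exists>k l. k < length vs \<and> l < length vs \<and> k \<noteq> l \<and>
          l \<noteq> (k + 1) mod length vs \<and> k \<noteq> (l + 1) mod length vs \<and> E (vs ! k) (vs ! l)))"

definition clique :: "('a \<Rightarrow> 'a \<Rightarrow> bool) \<Rightarrow> 'a set \<Rightarrow> bool" where
  "clique E K \<longleftrightarrow> (\<forall>i\<in>K. \<forall>j\<in>K. i \<noteq> j \<longrightarrow> E i j)"

lemma chordal_on_subset: "chordal_on V E \<Longrightarrow> U \<subseteq> V \<Longrightarrow> chordal_on U E"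
  unfolding chordal_on_def by blast

lemma chordal_on_image:
  assumes ch: "chordal_on V E" and inj: "inj_on h V"
    and edges: "\<And>i k. i \<in> V \<Longrightarrow> k \<in> V \<Longrightarrow> E' (h i) (h k) \<longleftrightarrow> E i k"
  shows "chordal_on (h ` V) E'"
  unfolding chordal_on_def
proof (intro allI impI)
  fix vs
  assume vs: "distinct vs \<and> 4 \<le> length vs \<and> set vs \<subseteq> h ` V \<and>
      (\<forall>k<length vs. E' (vs ! k) (vs ! ((k + 1) mod length vs)))"
  define us where "us = map (inv_into V h) vs"
  have us_V: "set us \<subseteq> V"
    using vs by (auto simp: us_def inv_into_into)
  have "h (inv_into V h w) = w" if "w \<in> set vs" for w
    using that vs f_inv_into_f[of w h V] by blast
  then have vs_us: "vs = map h us"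
    by (simp add: us_def map_idI)
  have us_in: "us ! k \<in> V" if "k < length us" for k
    using that us_V nth_mem by blast
  have "distinct us" "4 \<le> length us"
    using vs unfolding vs_us by (simp_all add: distinct_map)
  moreover have "\<forall>k<length us. E (us ! k) (us ! ((k + 1) mod length us))"
  proof (intro allI impI)
    fix k
    assume k: "k < length us"
    then have "E' (vs ! k) (vs ! ((k + 1) mod length vs))"
      using vs unfolding vs_us by simp
    moreover have k1: "(k + 1) mod length us < length us"
      using \<open>4 \<le> length us\<close> by (intro mod_less_divisor) linarith
    ultimately show "E (us ! k) (us ! ((k + 1) mod length us))"
      using k edges[OF us_in[OF k] us_in[OF k1]] unfolding vs_us by simp
  qed
  ultimately obtain k l where kl: "k < length us" "l < length us" "k \<noteq> l"
      "l \<noteq> (k + 1) mod length us" "k \<noteq> (l + 1) mod length us" "E (us ! k) (us ! l)"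
    using ch \<open>4 \<le> length us\<close> us_V unfolding chordal_on_def by blast
  then have "E' (vs ! k) (vs ! l)"
    using edges us_in by (simp add: vs_us)
  then show "\<exists>k l. k < length vs \<and> l < length vs \<and> k \<noteq> l \<and> l \<noteq> (k + 1) mod length vs \<and>
      k \<noteq> (l + 1) mod length vs \<and> E' (vs ! k) (vs ! l)"
    using kl unfolding vs_us length_map by blast
qed

lemma chordal_on_insert_universal:
  assumes ch: "chordal_on V E" and universal: "\<And>u. u \<in> V \<Longrightarrow> u \<noteq> a \<Longrightarrow> E a u"
  shows "chordal_on (insert a V) E"
  unfolding chordal_on_def
proof (intro allI impI)
  fix vs
  assume vs: "distinct vs \<and> 4 \<le> length vs \<and> set vs \<subseteq> insert a V \<and>
      (\<forall>k<length vs. E (vs ! k) (vs ! ((k + 1) mod length vs)))"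
  define L where "L = length vs"
  show "\<exists>k l. k < length vs \<and> l < length vs \<and> k \<noteq> l \<and> l \<noteq> (k + 1) mod length vs \<and>
      k \<noteq> (l + 1) mod length vs \<and> E (vs ! k) (vs ! l)"
  proof (cases "a \<in> set vs")
    case True
    \<comment> \<open>The chord joins \<open>a\<close> to the vertex two places further along the cycle.\<close>
    then obtain p where p: "p < L" "vs ! p = a"
      unfolding L_def by (auto simp: in_set_conv_nth)
    define q where "q = (p + 2) mod L"
    have "4 \<le> L"
      using vs L_def by simp
    then have q: "q < L" "q \<noteq> p" "q \<noteq> (p + 1) mod L" "p \<noteq> (q + 1) mod L"
      using p(1) unfolding q_def by (auto simp: mod_Suc)
    then have "vs ! q \<noteq> a"
      using vs p unfolding L_def by (auto simp: nth_eq_iff_index_eq)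
    moreover have "vs ! q \<in> set vs"
      using q(1) unfolding L_def by simp
    ultimately have "E (vs ! p) (vs ! q)"
      using vs universal p(2) by blast
    then show ?thesis
      using p(1) q unfolding L_def by blast
  next
    case False
    then show ?thesis
      using ch vs unfolding chordal_on_def by blast
  qed
qed

lemma chordal_on_cycle_chord:
  assumes ch: "chordal_on V E" and sym: "symp E"
    and vs: "distinct vs" "4 \<le> length vs" "set vs \<subseteq> V"
    and path: "\<And>k. Suc k < length vs \<Longrightarrow> E (vs ! k) (vs ! Suc k)"
    and closing: "E (last vs) (hd vs)"
  obtains k l where "Suc k < l" "l < length vs" "\<not> (k = 0 \<and> Suc l = length vs)"
    "E (vs ! k) (vs ! l)"
proof -
  define L where "L = length vs"
  have "E (vs ! k) (vs ! ((k + 1) mod L))" if "k < L" for k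
  proof (cases "Suc k < L")
    case True
    then show ?thesis using path L_def by simp
  next
    case False
    then have "Suc k = L"
      using that by simp
    then have "k = L - 1" "(k + 1) mod L = 0" "vs \<noteq> []"
      using vs(2) L_def by auto
    then show ?thesis
      using closing by (simp add: L_def last_conv_nth hd_conv_nth)
  qed
  then obtain k l where kl: "k < L" "l < L" "k \<noteq> l" "l \<noteq> (k + 1) mod L"
      "k \<noteq> (l + 1) mod L" "E (vs ! k) (vs ! l)"
    using ch vs unfolding chordal_on_def L_def by blast
  have chord: "Suc i < j \<and> \<not> (i = 0 \<and> Suc j = L)"
    if "i < j" "j < L" "j \<noteq> (i + 1) mod L" "i \<noteq> (j + 1) mod L" for i j
    using that by (cases "Suc j = L") auto
  show ?thesis
  proof (cases "k < l")
    case True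
    then show ?thesis using that chord[of k l] kl L_def by blast
  next
    case False
    then have "l < k" using kl(3) by simp
    then show ?thesis
      using that chord[of l k] kl sympD[OF sym kl(6)] L_def by blast
  qed
qed

definition walk_in :: "('a \<Rightarrow> 'a \<Rightarrow> bool) \<Rightarrow> 'a set \<Rightarrow> 'a list \<Rightarrow> bool" where
  "walk_in E C p \<longleftrightarrow> p \<noteq> [] \<and> set p \<subseteq> C \<and> successively (\<lambda>a b. a = b \<or> E a b) p"

lemma walk_in_take: "walk_in E C p \<Longrightarrow> 0 < n \<Longrightarrow> walk_in E C (take n p)"
  unfolding walk_in_def
  using successively_append_iff[of _ "take n p" "drop n p"] set_take_subset[of n p] by auto

lemma walk_in_drop: "walk_in E C p \<Longrightarrow> n < length p \<Longrightarrow> walk_in E C (drop n p)"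
  unfolding walk_in_def
  using successively_append_iff[of _ "take n p" "drop n p"] set_drop_subset[of n p] by auto

lemma walk_in_append:
  "walk_in E C p \<Longrightarrow> walk_in E C q \<Longrightarrow> last p = hd q \<or> E (last p) (hd q) \<Longrightarrow> walk_in E C (p @ q)"
  unfolding walk_in_def by (auto simp: successively_append_iff)

definition linking_walk :: "('a \<Rightarrow> 'a \<Rightarrow> bool) \<Rightarrow> 'a set \<Rightarrow> 'a \<Rightarrow> 'a \<Rightarrow> 'a list \<Rightarrow> bool" where
  "linking_walk E C x y p \<longleftrightarrow> walk_in E C p \<and> E x (hd p) \<and> E y (last p)"

definition shortest_linking_walk :: "('a \<Rightarrow> 'a \<Rightarrow> bool) \<Rightarrow> 'a set \<Rightarrow> 'a \<Rightarrow> 'a \<Rightarrow> 'a list \<Rightarrow> bool" where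
  "shortest_linking_walk E C x y p \<longleftrightarrow>
     linking_walk E C x y p \<and> (\<forall>q. linking_walk E C x y q \<longrightarrow> length p \<le> length q)"

lemma shortest_linking_walk_exists:
  "linking_walk E C x y p0 \<Longrightarrow> \<exists>p. shortest_linking_walk E C x y p"
  unfolding shortest_linking_walk_def using ex_has_least_nat[of "linking_walk E C x y" p0 length] by blast

lemma take_Suc_last: "i < length p \<Longrightarrow> last (take (Suc i) p) = p ! i"
  by (subst last_conv_nth) auto

lemma shortest_linking_walk_no_shortcut:
  assumes p: "shortest_linking_walk E C x y p" and ij: "Suc i < j" "j < length p"
  shows "\<not> walk_in E C (take (Suc i) p @ drop j p)"
proof
  assume "walk_in E C (take (Suc i) p @ drop j p)"
  moreover have "hd (take (Suc i) p @ drop j p) = hd p" "last (take (Suc i) p @ drop j p) = last p"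
    using ij by (simp_all add: hd_append)
  ultimately have "linking_walk E C x y (take (Suc i) p @ drop j p)"
    using p unfolding shortest_linking_walk_def linking_walk_def by simp
  then have "length p \<le> length (take (Suc i) p @ drop j p)"
    using p unfolding shortest_linking_walk_def by blast
  then show False
    using ij by simp
qed

lemma shortest_linking_walk_distinct:
  assumes p: "shortest_linking_walk E C x y p"
  shows "distinct p"
proof (rule ccontr)
  have walk: "walk_in E C p" and hd: "E x (hd p)" and last: "E y (last p)"
    and shortest: "\<And>q. linking_walk E C x y q \<Longrightarrow> length p \<le> length q"
    using p unfolding shortest_linking_walk_def linking_walk_def by auto
  assume "\<not> distinct p"
  then obtain i j where ij: "i < j" "j < length p" "p ! i = p ! j"
    by (metis distinct_conv_nth linorder_neqE_nat)
  show False
  proof (cases "Suc j < length p")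
    case True
    then have "walk_in E C (take (Suc i) p @ drop (Suc j) p)"
      using ij walk successively_nth[of _ p j]
      by (intro walk_in_append walk_in_take walk_in_drop)
        (auto simp: take_Suc_last hd_drop_conv_nth walk_in_def)
    then show False
      using shortest_linking_walk_no_shortcut[OF p, of i "Suc j"] ij True by simp
  next
    case False
    then have "length p = Suc j"
      using ij by simp
    then have "linking_walk E C x y (take (Suc i) p)"
      using ij walk hd last take_Suc_last[of i p] last_conv_nth[of p] walk_in_take[OF walk, of "Suc i"]
      by (auto simp: walk_in_def linking_walk_def)
    then show False
      using shortest ij by fastforce
  qed
qed

lemma shortest_linking_walk_induced:
  assumes p: "shortest_linking_walk E C x y p"
  shows "\<And>i. 0 < i \<Longrightarrow> i < length p \<Longrightarrow> \<not> E x (p ! i)"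
    and "\<And>i. Suc i < length p \<Longrightarrow> \<not> E y (p ! i)"
    and "\<And>i j. Suc i < j \<Longrightarrow> j < length p \<Longrightarrow> \<not> E (p ! i) (p ! j)"
    and "\<And>i. Suc i < length p \<Longrightarrow> E (p ! i) (p ! Suc i)"
proof -
  have walk: "walk_in E C p" and hd: "E x (hd p)" and last: "E y (last p)"
    and shortest: "\<And>q. linking_walk E C x y q \<Longrightarrow> length p \<le> length q"
    using p unfolding shortest_linking_walk_def linking_walk_def by auto
  show "\<not> E x (p ! i)" if "0 < i" "i < length p" for i
  proof
    assume "E x (p ! i)"
    then have "linking_walk E C x y (drop i p)"
      using that walk_in_drop[OF walk that(2)] last by (simp add: linking_walk_def hd_drop_conv_nth)
    then show False
      using shortest that by fastforce
  qed
  show "\<not> E y (p ! i)" if "Suc i < length p" for i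
  proof
    assume "E y (p ! i)"
    then have "linking_walk E C x y (take (Suc i) p)"
      using that walk_in_take[OF walk, of "Suc i"] hd walk
      by (simp add: linking_walk_def take_Suc_last walk_in_def)
    then show False
      using shortest that by fastforce
  qed
  show "\<not> E (p ! i) (p ! j)" if "Suc i < j" "j < length p" for i j
  proof
    assume "E (p ! i) (p ! j)"
    then have "walk_in E C (take (Suc i) p @ drop j p)"
      using that walk by (intro walk_in_append walk_in_take walk_in_drop)
        (auto simp: take_Suc_last hd_drop_conv_nth)
    then show False
      using shortest_linking_walk_no_shortcut[OF p that] by blast
  qed
  show "E (p ! i) (p ! Suc i)" if "Suc i < length p" for i
  proof -
    have "p ! i = p ! Suc i \<or> E (p ! i) (p ! Suc i)"
      using successively_nth[OF _ that] walk unfolding walk_in_def by blast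
    moreover have "p ! i \<noteq> p ! Suc i"
      using shortest_linking_walk_distinct[OF p] that by (simp add: nth_eq_iff_index_eq)
    ultimately show ?thesis
      by simp
  qed
qed

lemma nth_Cons_Cons_append_singleton:
  "i < length p + 3 \<Longrightarrow> (v # x # p @ [y]) ! i =
    (if i = 0 then v else if i = 1 then x else if i < length p + 2 then p ! (i - 2) else y)"
  by (auto simp: nth_Cons' nth_append numeral_2_eq_2)

lemma cycle_through_shortest_linking_walk_chordless:
  assumes p: "shortest_linking_walk E C x y p" and sym: "symp E"
    and v: "\<forall>c\<in>C. \<not> E v c" and not_xy: "\<not> E x y"
    and kl: "Suc k < l" "l < length p + 3" "\<not> (k = 0 \<and> l = length p + 2)"
  shows "\<not> E ((v # x # p @ [y]) ! k) ((v # x # p @ [y]) ! l)"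
proof
  define vs where "vs = v # x # p @ [y]"
  note vs_nth = nth_Cons_Cons_append_singleton[of _ p v x y, folded vs_def]
  note induced = shortest_linking_walk_induced[OF p]
  have "set p \<subseteq> C"
    using p unfolding shortest_linking_walk_def linking_walk_def walk_in_def by blast
  assume "E ((v # x # p @ [y]) ! k) ((v # x # p @ [y]) ! l)"
  then have chord: "E (vs ! k) (vs ! l)"
    unfolding vs_def .
  consider "k = 0" "l < length p + 2" | "k = 1" "l < length p + 2" | "k = 1" "l = length p + 2"
    | "1 < k" "l < length p + 2" | "1 < k" "l = length p + 2"
    using kl by linarith
  then show False
  proof cases
    case 1
    then have "vs ! k = v" "vs ! l = p ! (l - 2)" "l - 2 < length p"
      using kl vs_nth by auto
    then show False
      using chord v \<open>set p \<subseteq> C\<close> by (metis nth_mem subsetD)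
  next
    case 2
    then have "vs ! k = x" "vs ! l = p ! (l - 2)" "0 < l - 2" "l - 2 < length p"
      using kl vs_nth by auto
    then show False
      using chord induced(1) by metis
  next
    case 3
    then have "vs ! k = x" "vs ! l = y"
      using kl vs_nth by auto
    then show False
      using chord not_xy by simp
  next
    case 4
    then have "vs ! k = p ! (k - 2)" "vs ! l = p ! (l - 2)" "Suc (k - 2) < l - 2" "l - 2 < length p"
      using kl vs_nth by auto
    then show False
      using chord induced(3) by metis
  next
    case 5
    then have "vs ! k = p ! (k - 2)" "vs ! l = y" "Suc (k - 2) < length p"
      using kl vs_nth by auto
    then show False
      using chord induced(2) sympD[OF sym] by metis
  qed
qed

lemma chordal_on_linked_neighbours_adjacent:
  assumes ch: "chordal_on V E" and sym: "symp E"
    and C: "C \<subseteq> V" and v: "v \<in> V" "v \<notin> C" "\<forall>c\<in>C. \<not> E v c"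
    and xy: "x \<in> V" "y \<in> V" "x \<noteq> y" "x \<notin> C" "y \<notin> C" "v \<noteq> x" "v \<noteq> y" "E v x" "E v y"
    and linked: "linking_walk E C x y p0"
  shows "E x y"
proof (rule ccontr)
  assume not_xy: "\<not> E x y"
  obtain p where p: "shortest_linking_walk E C x y p"
    using shortest_linking_walk_exists[OF linked] by blast
  then have "p \<noteq> []" "set p \<subseteq> C" "E x (hd p)" "E y (last p)"
    unfolding shortest_linking_walk_def linking_walk_def walk_in_def by auto
  define vs where "vs = v # x # p @ [y]"
  note vs_nth = nth_Cons_Cons_append_singleton[of _ p v x y, folded vs_def]
  have len: "length vs = length p + 3"
    by (simp add: vs_def)
  have path: "E (vs ! k) (vs ! Suc k)" if k: "Suc k < length vs" for k
  proof -
    consider "k = 0" | "k = 1" | "1 < k" "Suc k < length p + 2" | "Suc k = length p + 2"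
      using k len by linarith
    then show ?thesis
    proof cases
      case 3
      then have "vs ! k = p ! (k - 2)" "vs ! Suc k = p ! Suc (k - 2)" "Suc (k - 2) < length p"
        using vs_nth k len by (auto simp: Suc_diff_Suc numeral_2_eq_2)
      then show ?thesis
        using shortest_linking_walk_induced(4)[OF p] by metis
    next
      case 4
      then have "vs ! k = last p" "vs ! Suc k = y"
        using vs_nth k len \<open>p \<noteq> []\<close> by (auto simp: last_conv_nth)
      then show ?thesis
        using sympD[OF sym \<open>E y (last p)\<close>] by simp
    qed (use vs_nth k len xy \<open>E x (hd p)\<close> \<open>p \<noteq> []\<close> in \<open>auto simp: hd_conv_nth\<close>)
  qed
  have closing: "E (last vs) (hd vs)"
    using sympD[OF sym xy(9)] by (simp add: vs_def)
  have "distinct vs" "set vs \<subseteq> V" "4 \<le> length vs"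
    using shortest_linking_walk_distinct[OF p] xy v \<open>set p \<subseteq> C\<close> C \<open>p \<noteq> []\<close>
    by (auto simp: vs_def Suc_leI)
  then obtain k l where "Suc k < l" "l < length vs" "\<not> (k = 0 \<and> Suc l = length vs)"
      "E (vs ! k) (vs ! l)"
    using chordal_on_cycle_chord[OF ch sym _ _ _ path closing] by blast
  then show False
    using cycle_through_shortest_linking_walk_chordless[OF p sym v(3) not_xy, of k l] len
    unfolding vs_def by simp
qed

definition component :: "('a \<Rightarrow> 'a \<Rightarrow> bool) \<Rightarrow> 'a set \<Rightarrow> 'a \<Rightarrow> 'a set" where
  "component E W c0 = {c. \<exists>q. walk_in E W q \<and> hd q = c0 \<and> last q = c}"

lemma component_subset: "component E W c0 \<subseteq> W"
  unfolding component_def walk_in_def by (auto intro: last_in_set)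

lemma component_start: "c0 \<in> W \<Longrightarrow> c0 \<in> component E W c0"
  unfolding component_def walk_in_def by (intro CollectI exI[of _ "[c0]"]) simp

lemma component_closed:
  assumes "c \<in> component E W c0" "d \<in> W" "E c d"
  shows "d \<in> component E W c0"
proof -
  obtain q where "walk_in E W q" "hd q = c0" "last q = c"
    using assms(1) unfolding component_def by blast
  then have "walk_in E W (q @ [d])" "hd (q @ [d]) = c0"
    using assms(2,3) by (auto simp: walk_in_def successively_append_iff)
  then show ?thesis
    unfolding component_def by fastforce
qed

lemma walk_in_component:
  assumes "walk_in E W q" "hd q = c0"
  shows "walk_in E (component E W c0) q"
proof -
  have "q ! i \<in> component E W c0" if "i < length q" for i
  proof -
    have "walk_in E W (take (Suc i) q)" "hd (take (Suc i) q) = c0" "last (take (Suc i) q) = q ! i"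
      using assms that walk_in_take[OF assms(1)] by (auto simp: walk_in_def last_conv_nth)
    then show ?thesis
      unfolding component_def by blast
  qed
  then have "set q \<subseteq> component E W c0"
    by (metis in_set_conv_nth subsetI)
  then show ?thesis
    using assms(1) by (simp add: walk_in_def)
qed

lemma walk_in_rev:
  assumes "symp E" "walk_in E C q"
  shows "walk_in E C (rev q)"
proof -
  have "successively (\<lambda>a b. a = b \<or> E a b) q"
    using assms(2) unfolding walk_in_def by blast
  then have "successively (\<lambda>a b. b = a \<or> E b a) q"
    by (rule successively_mono) (use sympD[OF assms(1)] in blast)
  then show ?thesis
    using assms(2) by (simp add: walk_in_def)
qed

lemma component_boundary_adjacent:
  assumes sym: "symp E" and W: "W = {u \<in> V. u \<noteq> v \<and> \<not> E v u}"
    and x: "x \<in> V" "x \<notin> component E W c0" and c: "c \<in> component E W c0" "E x c"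
  shows "x \<noteq> v" "E v x"
proof -
  have "c \<in> W"
    using subsetD[OF component_subset c(1)] .
  then have "c \<noteq> v" "\<not> E v c"
    using W by simp_all
  then show "x \<noteq> v"
    using c(2) by blast
  show "E v x"
  proof (rule ccontr)
    assume "\<not> E v x"
    then have "x \<in> W"
      using W x(1) \<open>x \<noteq> v\<close> by simp
    then show False
      using component_closed[OF c(1) _ sympD[OF sym c(2)]] x(2) by blast
  qed
qed

lemma chordal_on_component_boundary_clique:
  assumes ch: "chordal_on V E" and sym: "symp E" and v: "v \<in> V"
    and W: "W = {u \<in> V. u \<noteq> v \<and> \<not> E v u}"
  shows "clique E {x \<in> V - component E W c0. \<exists>c\<in>component E W c0. E x c}"
  unfolding clique_def
proof (intro ballI impI)
  define C where "C = component E W c0"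
  fix x y
  assume "x \<in> {x \<in> V - component E W c0. \<exists>c\<in>component E W c0. E x c}"
    and "y \<in> {x \<in> V - component E W c0. \<exists>c\<in>component E W c0. E x c}" and "x \<noteq> y"
  then obtain cx cy where x: "x \<in> V" "x \<notin> C" "cx \<in> C" "E x cx"
    and y: "y \<in> V" "y \<notin> C" "cy \<in> C" "E y cy"
    unfolding C_def by blast
  have "C \<subseteq> W"
    unfolding C_def by (rule component_subset)
  then have CV: "C \<subseteq> V" and nv: "v \<notin> C" "\<forall>c\<in>C. \<not> E v c"
    using W by auto
  obtain qx qy where qx: "walk_in E W qx" "hd qx = c0" "last qx = cx"
    and qy: "walk_in E W qy" "hd qy = c0" "last qy = cy"
    using x(3) y(3) unfolding C_def component_def by blast
  have "walk_in E C (rev qx)" "walk_in E C qy"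
    using walk_in_rev[OF sym walk_in_component[OF qx(1,2)]] walk_in_component[OF qy(1,2)]
    unfolding C_def by simp_all
  then have "walk_in E C (rev qx @ qy)"
    using qx(1,2) qy(2) by (intro walk_in_append) (auto simp: last_rev walk_in_def)
  moreover have "E x (hd (rev qx @ qy))" "E y (last (rev qx @ qy))"
    using qx qy x y by (auto simp: hd_rev walk_in_def)
  moreover have "x \<noteq> v" "E v x" "y \<noteq> v" "E v y"
    using component_boundary_adjacent[OF sym W] x y unfolding C_def by blast+
  ultimately show "E x y"
    using chordal_on_linked_neighbours_adjacent[OF ch sym CV v nv x(1) y(1) \<open>x \<noteq> y\<close> x(2) y(2)]
    unfolding linking_walk_def by auto
qed

definition simplicial :: "'a set \<Rightarrow> ('a \<Rightarrow> 'a \<Rightarrow> bool) \<Rightarrow> 'a \<Rightarrow> bool" where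
  "simplicial V E s \<longleftrightarrow> clique E {u\<in>V. E s u}"

lemma simplicial_outside_clique_via_component:
  assumes sym: "symp E" and ch: "chordal_on V E"
    and v: "v \<in> V" "K \<subseteq> insert v {u\<in>V. E v u}" "insert v {u\<in>V. E v u} \<noteq> V"
    and IH: "\<And>V' K'. V' \<subset> V \<Longrightarrow> K' \<subseteq> V' \<Longrightarrow> clique E K' \<Longrightarrow> K' \<noteq> V' \<Longrightarrow>
      \<exists>s\<in>V' - K'. simplicial V' E s"
  shows "\<exists>s\<in>V - K. simplicial V E s"
proof -
  \<comment> \<open>The neighbourhood \<open>S\<close> of a component \<open>C\<close> of the non-neighbours of \<open>v\<close> is a clique, so a
    simplicial vertex of \<open>C \<union> S\<close> outside \<open>S\<close> is simplicial in \<open>V\<close>.\<close>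
  define W where "W = {u\<in>V. u \<noteq> v \<and> \<not> E v u}"
  obtain c0 where "c0 \<in> W"
    using v(1,3) unfolding W_def by auto
  define C where "C = component E W c0"
  define S where "S = {x \<in> V - C. \<exists>c\<in>C. E x c}"
  have CW: "C \<subseteq> W"
    unfolding C_def by (rule component_subset)
  have S_adj: "x \<noteq> v" "E v x" if "x \<in> S" for x
    using that component_boundary_adjacent[OF sym W_def] unfolding S_def C_def by blast+
  have "v \<notin> C \<union> S" "C \<union> S \<subseteq> V"
    using CW S_adj unfolding W_def S_def by blast+
  then have "C \<union> S \<subset> V"
    using v(1) by blast
  moreover have "c0 \<in> C"
    unfolding C_def by (rule component_start[OF \<open>c0 \<in> W\<close>])
  then have "S \<noteq> C \<union> S"
    unfolding S_def by blast
  moreover have "clique E S"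
    unfolding S_def C_def by (rule chordal_on_component_boundary_clique[OF ch sym v(1) W_def])
  ultimately obtain s where s: "s \<in> C" "simplicial (C \<union> S) E s"
    using IH[of "C \<union> S" S] by (metis Diff_iff Un_iff sup_ge2)
  have "{u\<in>V. E s u} = {u\<in>C \<union> S. E s u}"
  proof (intro set_eqI iffI)
    fix u
    assume u: "u \<in> {u\<in>V. E s u}"
    show "u \<in> {u\<in>C \<union> S. E s u}"
    proof (cases "u \<in> W")
      case True
      then have "u \<in> C"
        using component_closed[of s E W c0 u] s(1) u unfolding C_def by simp
      then show ?thesis using u by blast
    next
      case False
      then have "u \<in> S"
        using u CW s(1) sympD[OF sym] unfolding S_def by blast
      then show ?thesis using u by blast
    qed
  qed (use CW S_def W_def in blast)
  moreover have "s \<in> V - K"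
    using s(1) CW v(2) unfolding W_def by blast
  ultimately show ?thesis
    using s(2) unfolding simplicial_def by (intro bexI[of _ s]) simp_all
qed

lemma simplicial_insert_universal:
  assumes sym: "symp E" and k: "insert k {u\<in>V. E k u} = V"
    and s: "s \<noteq> k" "simplicial (V - {k}) E s"
  shows "simplicial V E s"
  unfolding simplicial_def clique_def
proof (intro ballI impI)
  fix i j
  assume ij: "i \<in> {u\<in>V. E s u}" "j \<in> {u\<in>V. E s u}" "i \<noteq> j"
  consider "i = k" | "j = k" | "i \<noteq> k" "j \<noteq> k"
    by blast
  then show "E i j"
  proof cases
    case 1
    have "j \<in> insert k {u\<in>V. E k u}"
      using ij k by simp
    then show ?thesis
      using 1 ij by simp
  next
    case 2
    have "i \<in> insert k {u\<in>V. E k u}"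
      using ij k by simp
    then have "E j i"
      using 2 ij by simp
    then show ?thesis
      by (rule sympD[OF sym])
  next
    case 3
    then show ?thesis
      using ij s(2) unfolding simplicial_def clique_def by blast
  qed
qed

lemma simplicial_outside_clique_via_universal_vertex:
  assumes sym: "symp E" and K: "K \<subseteq> V" "clique E K" "K \<noteq> V"
    and universal: "\<And>v. v \<in> V \<Longrightarrow> K \<subseteq> insert v {u\<in>V. E v u} \<Longrightarrow> insert v {u\<in>V. E v u} = V"
    and IH: "\<And>V' K'. V' \<subset> V \<Longrightarrow> K' \<subseteq> V' \<Longrightarrow> clique E K' \<Longrightarrow> K' \<noteq> V' \<Longrightarrow>
      \<exists>s\<in>V' - K'. simplicial V' E s"
  shows "\<exists>s\<in>V - K. simplicial V E s"
proof (cases "K = {}")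
  case True
  then obtain s where "s \<in> V"
    using K(3) by blast
  have "E i j" if ij: "i \<in> {u\<in>V. E s u}" "j \<in> {u\<in>V. E s u}" "i \<noteq> j" for i j
  proof -
    have "j \<in> insert i {u\<in>V. E i u}"
      using universal[of i] ij True by simp
    then show "E i j"
      using ij by simp
  qed
  then show ?thesis
    using \<open>s \<in> V\<close> True unfolding simplicial_def clique_def by blast
next
  case False
  then obtain k where "k \<in> K"
    by blast
  have "K \<subseteq> insert k {u\<in>V. E k u}"
  proof
    fix j
    assume "j \<in> K"
    then show "j \<in> insert k {u\<in>V. E k u}"
      using \<open>k \<in> K\<close> K unfolding clique_def by (cases "j = k") auto
  qed
  then have k_universal: "insert k {u\<in>V. E k u} = V"
    using universal K(1) \<open>k \<in> K\<close> by blast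
  have "clique E (K - {k})"
    using K(2) unfolding clique_def by blast
  then obtain s where s: "s \<in> (V - {k}) - (K - {k})" "simplicial (V - {k}) E s"
    using IH[of "V - {k}" "K - {k}"] K \<open>k \<in> K\<close> by blast
  then have "simplicial V E s"
    using simplicial_insert_universal[OF sym k_universal] by blast
  then show ?thesis
    using s(1) by blast
qed

text \<open>Dirac's lemma, strengthened so that the simplicial vertex avoids a given clique.\<close>

lemma chordal_on_simplicial_outside_clique:
  assumes "finite V" "symp E" "chordal_on V E" "K \<subseteq> V" "clique E K" "K \<noteq> V"
  shows "\<exists>s\<in>V - K. simplicial V E s"
  using assms
proof (induction "card V" arbitrary: V K rule: less_induct)
  case less
  have IH: "\<exists>s\<in>V' - K'. simplicial V' E s"
    if "V' \<subset> V" "K' \<subseteq> V'" "clique E K'" "K' \<noteq> V'" for V' K'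
  proof -
    have "card V' < card V" "finite V'" "chordal_on V' E"
      using psubset_card_mono[OF less.prems(1) that(1)] finite_subset[of V' V]
        chordal_on_subset[OF less.prems(3), of V'] less.prems(1) that(1) by auto
    then show ?thesis
      using less.hyps[of V' K'] less.prems(2) that(2-4) by blast
  qed
  show ?case
  proof (cases "\<exists>v\<in>V. K \<subseteq> insert v {u\<in>V. E v u} \<and> insert v {u\<in>V. E v u} \<noteq> V")
    case True
    then obtain v where "v \<in> V" "K \<subseteq> insert v {u\<in>V. E v u}" "insert v {u\<in>V. E v u} \<noteq> V"
      by blast
    then show ?thesis
      by (rule simplicial_outside_clique_via_component[OF less.prems(2,3) _ _ _ IH])
  next
    case False
    then show ?thesis
      using simplicial_outside_clique_via_universal_vertex[OF less.prems(2,4,5,6) _ IH] by blast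
  qed
qed

section \<open>Positive semidefinite completion\<close>

lemma psd_completion_chordal:
  assumes "finite V" "symp E" "chordal_on V E" "\<And>K. K \<subseteq> V \<Longrightarrow> clique E K \<Longrightarrow> psd_on K A"
  shows "\<exists>A'. psd_on V A' \<and> (\<forall>a\<in>V. \<forall>b\<in>V. a = b \<or> E a b \<longrightarrow> A' a b = A a b)"
  using assms
proof (induction "card V" arbitrary: V rule: less_induct)
  case less
  note fin = less.prems(1) and sym = less.prems(2) and ch = less.prems(3)
    and clique_psd = less.prems(4)
  show ?case
  proof (cases "V = {}")
    case True
    then show ?thesis
      using clique_psd[of "{}"] by (auto simp: clique_def)
  next
    case False
    then obtain s where s: "s \<in> V" "clique E {u\<in>V. E s u}"
      using chordal_on_simplicial_outside_clique[OF fin sym ch, of "{}"]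
      by (auto simp: clique_def simplicial_def)
    define V' where "V' = V - {s}"
    define N where "N = {u\<in>V'. E s u}"
    have V: "V = insert s V'" "s \<notin> V'" "finite V'" "N \<subseteq> V'"
      using s(1) fin unfolding V'_def N_def by auto
    obtain A0 where A0: "psd_on V' A0" "\<forall>a\<in>V'. \<forall>b\<in>V'. a = b \<or> E a b \<longrightarrow> A0 a b = A a b"
    proof -
      have "card V' < card V"
        using fin s(1) unfolding V'_def by (rule card_Diff1_less)
      moreover have "chordal_on V' E"
        using chordal_on_subset[OF ch] unfolding V'_def by blast
      ultimately show ?thesis
        using less.hyps[of V'] V(3) sym clique_psd that unfolding V'_def by blast
    qed
    have N_clique: "clique E (insert s N)"
      using s(2) sympD[OF sym] unfolding clique_def N_def V'_def by blast
    have "psd_on (insert s N) A"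
      using clique_psd N_clique V by blast
    moreover have "\<forall>a\<in>N. \<forall>b\<in>N. A0 a b = A a b"
      using A0(2) N_clique V(4) unfolding clique_def by blast
    ultimately obtain A' where A': "psd_on (insert s V') A'" "\<forall>a\<in>V'. \<forall>b\<in>V'. A' a b = A0 a b"
        "\<forall>a\<in>insert s N. \<forall>b\<in>insert s N. A' a b = A a b"
      using psd_on_extend_vertex[OF V(3,2,4) A0(1)] by blast
    have "A' a b = A a b" if "a \<in> V" "b \<in> V" "a = b \<or> E a b" for a b
    proof (cases "a = s \<or> b = s")
      case True
      then have "a \<in> insert s N" "b \<in> insert s N"
        using that sympD[OF sym] unfolding N_def V'_def by auto
      then show ?thesis
        using A'(3) by blast
    next
      case False
      then show ?thesis
        using that A'(2) A0(2) unfolding V'_def by auto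
    qed
    then show ?thesis
      using A'(1) V(1) by auto
  qed
qed

section \<open>Moment matrices of order one\<close>

definition unit_mi :: "nat \<Rightarrow> mindex" where
  "unit_mi i = (\<lambda>j. if j = i then 1 else 0)"

lemma unit_mi_inject [simp]: "unit_mi i = unit_mi k \<longleftrightarrow> i = k"
  unfolding unit_mi_def by (metis zero_neq_one)

lemma unit_mi_neq_zero_mi [simp]: "unit_mi i \<noteq> zero_mi" "zero_mi \<noteq> unit_mi i"
  unfolding unit_mi_def zero_mi_def by (metis zero_neq_one)+

lemma msupp_unit_mi [simp]: "msupp (unit_mi i) = {i}"
  unfolding msupp_def unit_mi_def by auto

lemma mono_idx_0: "mono_idx n 0 I = {zero_mi}"
proof -
  have "\<alpha> = zero_mi" if "mi_on n \<alpha>" "mdeg n \<alpha> = 0" for \<alpha>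
  proof
    fix i
    show "\<alpha> i = zero_mi i"
      using that by (cases "i < n") (auto simp: mi_on_def mdeg_def zero_mi_def)
  qed
  then show ?thesis
    unfolding mono_idx_def by (auto simp: mi_on_def mdeg_def msupp_def zero_mi_def)
qed

lemma mono_idx_1: "mono_idx n 1 I = insert zero_mi (unit_mi ` (I \<inter> {..<n}))"
proof (intro set_eqI iffI)
  fix \<alpha>
  assume "\<alpha> \<in> mono_idx n 1 I"
  then have mi: "mi_on n \<alpha>" and deg: "mdeg n \<alpha> \<le> 1" and supp: "msupp \<alpha> \<subseteq> I"
    unfolding mono_idx_def by auto
  show "\<alpha> \<in> insert zero_mi (unit_mi ` (I \<inter> {..<n}))"
  proof (cases "\<alpha> = zero_mi")
    case False
    then obtain j where j: "\<alpha> j \<noteq> 0"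
      unfolding zero_mi_def by auto
    then have "j < n"
      using mi unfolding mi_on_def by (meson not_le)
    then have "mdeg n \<alpha> = \<alpha> j + (\<Sum>i\<in>{..<n} - {j}. \<alpha> i)"
      unfolding mdeg_def by (simp add: sum.remove)
    then have "\<alpha> j = 1" "(\<Sum>i\<in>{..<n} - {j}. \<alpha> i) = 0"
      using deg j by linarith+
    then have "\<alpha> j = 1" "\<forall>i\<in>{..<n} - {j}. \<alpha> i = 0"
      by simp_all
    then have "\<alpha> = unit_mi j"
      using mi \<open>j < n\<close> unfolding mi_on_def unit_mi_def by (metis Diff_iff lessThan_iff not_le singletonD)
    moreover have "j \<in> I"
      using supp j unfolding msupp_def by auto
    ultimately show ?thesis
      using \<open>j < n\<close> by blast
  qed simp
next
  fix \<alpha>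
  assume "\<alpha> \<in> insert zero_mi (unit_mi ` (I \<inter> {..<n}))"
  then show "\<alpha> \<in> mono_idx n 1 I"
    unfolding mono_idx_def
    by (auto simp: mi_on_def mdeg_def msupp_def zero_mi_def unit_mi_def sum.delta split: if_splits)
qed

lemma finite_mono_idx_1: "finite (mono_idx n 1 I)"
  unfolding mono_idx_1 by simp

lemma loc_entry_one_poly: "loc_entry y one_poly b c = y (b, c)"
proof -
  have "psupp one_poly = {(zero_mi, zero_mi)}"
    unfolding psupp_def one_poly_def zero_mi_def by (auto split: if_splits)
  then show ?thesis
    unfolding loc_entry_def by (simp add: one_poly_def zero_mi_def)
qed

lemma loc_entry_zero_mi: "loc_entry y g zero_mi zero_mi = Lfun y g"
  unfolding loc_entry_def Lfun_def zero_mi_def by simp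

lemma psd_on_singleton: "psd_on {z} M \<longleftrightarrow> Im (M z z) = 0 \<and> 0 \<le> Re (M z z)"
proof
  assume "psd_on {z} M"
  then show "Im (M z z) = 0 \<and> 0 \<le> Re (M z z)"
    using psd_on_diag[of "{z}" M z] by simp
next
  assume diag: "Im (M z z) = 0 \<and> 0 \<le> Re (M z z)"
  then have real: "M z z = complex_of_real (Re (M z z))"
    by (simp add: complex_eq_iff)
  have "cnj (v z) * M z z * v z = complex_of_real ((cmod (v z))\<^sup>2 * Re (M z z))" for v
    using complex_norm_square[of "v z"] by (subst real) (simp add: mult.commute)
  then show "psd_on {z} M"
    using diag by (simp add: psd_on_def complex_eq_iff)
qed

lemma loc_psd_0: "loc_psd n 0 I g y \<longleftrightarrow> Im (Lfun y g) = 0 \<and> 0 \<le> Re (Lfun y g)"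
  unfolding loc_psd_def mono_idx_0 psd_on_singleton loc_entry_zero_mi ..

lemma loc_psd_1_one_poly: "loc_psd n 1 I one_poly y \<longleftrightarrow> psd_on (mono_idx n 1 I) (\<lambda>b c. y (b, c))"
  unfolding loc_psd_def loc_entry_one_poly ..

text \<open>The entries of \<open>M_1(y)\<close> constrained by the sparse relaxation: the row of the constant
  monomial lies in every clique block.\<close>

definition monomial_graph :: "(nat \<Rightarrow> nat \<Rightarrow> bool) \<Rightarrow> mindex \<Rightarrow> mindex \<Rightarrow> bool" where
  "monomial_graph H a b \<longleftrightarrow> a \<noteq> b \<and>
     (a = zero_mi \<or> b = zero_mi \<or> (\<exists>i k. a = unit_mi i \<and> b = unit_mi k \<and> H i k))"

lemma monomial_graph_unit_mi: "monomial_graph H (unit_mi i) (unit_mi k) \<longleftrightarrow> i \<noteq> k \<and> H i k"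
  unfolding monomial_graph_def by auto

lemma symp_monomial_graph: "is_graph n H \<Longrightarrow> symp (monomial_graph H)"
  unfolding is_graph_def monomial_graph_def by (auto intro: sympI)

lemma chordal_iff_chordal_on: "chordal n H \<longleftrightarrow> chordal_on {..<n} H"
  unfolding chordal_def chordal_on_def ..

lemma chordal_on_monomial_graph:
  assumes "is_graph n H" "chordal n H"
  shows "chordal_on (mono_idx n 1 {..<n}) (monomial_graph H)"
proof -
  have "chordal_on (unit_mi ` {..<n}) (monomial_graph H)"
  proof (rule chordal_on_image)
    show "chordal_on {..<n} H"
      using assms(2) by (simp add: chordal_iff_chordal_on)
    show "inj_on unit_mi {..<n}"
      by (simp add: inj_on_def)
    show "monomial_graph H (unit_mi i) (unit_mi k) \<longleftrightarrow> H i k" if "i \<in> {..<n}" "k \<in> {..<n}" for i k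
      using assms(1) unfolding monomial_graph_unit_mi is_graph_def by blast
  qed
  then show ?thesis
    unfolding mono_idx_1 by (auto intro: chordal_on_insert_universal simp: monomial_graph_def)
qed

lemma monomial_clique_in_max_clique:
  assumes H: "is_graph n H" and K: "K \<subseteq> mono_idx n 1 {..<n}" "clique (monomial_graph H) K"
  shows "\<exists>I\<in>max_cliques n H. K \<subseteq> mono_idx n 1 I"
proof -
  define I0 where "I0 = {i. i < n \<and> unit_mi i \<in> K}"
  have "is_clique n H I0"
    unfolding is_clique_def
  proof (intro conjI ballI impI)
    show "I0 \<subseteq> {..<n}"
      unfolding I0_def by auto
    fix i j
    assume "i \<in> I0" "j \<in> I0" "i \<noteq> j"
    then have "monomial_graph H (unit_mi i) (unit_mi j)"
      using K(2) unfolding I0_def clique_def by simp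
    then show "H i j"
      by (simp add: monomial_graph_unit_mi)
  qed
  moreover have "finite {C. is_clique n H C}"
    by (rule finite_subset[of _ "Pow {..<n}"]) (auto simp: is_clique_def)
  ultimately obtain I where I: "is_clique n H I" "I0 \<subseteq> I"
      and maximal: "\<forall>C\<in>{C. is_clique n H C}. I \<subseteq> C \<longrightarrow> I = C"
    using finite_has_maximal2[of "{C. is_clique n H C}" I0] by blast
  have "I \<in> max_cliques n H"
    using I(1) maximal unfolding max_cliques_def by blast
  moreover have "K \<subseteq> mono_idx n 1 I"
    using K(1) I(2) unfolding mono_idx_1 I0_def by auto
  ultimately show ?thesis
    by blast
qed

lemma monomial_graph_if_support_edges:
  assumes "b \<in> mono_idx n 1 {..<n}" "c \<in> mono_idx n 1 {..<n}"
    and "\<And>i k. i \<noteq> k \<Longrightarrow> i < n \<Longrightarrow> k < n \<Longrightarrow> {i, k} \<subseteq> msupp b \<union> msupp c \<Longrightarrow> H i k"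
  shows "b = c \<or> monomial_graph H b c"
  using assms unfolding mono_idx_1 monomial_graph_def by auto

section \<open>The dense and the sparse relaxation of order one\<close>

lemma half_deg_eq_1: "1 \<le> pdeg n p \<Longrightarrow> pdeg n p \<le> 2 \<Longrightarrow> half_deg n p = 1"
  unfolding half_deg_def by (cases "pdeg n p = 1") auto

lemma Lfun_cong_support: "(\<And>bc. bc \<in> psupp p \<Longrightarrow> y' bc = y bc) \<Longrightarrow> Lfun y' p = Lfun y p"
  unfolding Lfun_def by (intro sum.cong refl) auto

lemma dense_feasible_imp_cs_feasible:
  assumes half_deg: "\<forall>j\<in>{1..m}. half_deg n (g j) = 1" and dense: "dense_feasible n f g m 1 y"
  shows "cs_feasible n f g m 1 H asg y"
proof -
  have Jprime: "Jprime n g m 1 = {1..m}"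
    using half_deg unfolding Jprime_def by auto
  have M: "psd_on (mono_idx n 1 {..<n}) (\<lambda>b c. y (b, c))"
    using dense unfolding dense_feasible_def loc_psd_1_one_poly by blast
  have "loc_psd n 1 I one_poly y" if "I \<in> max_cliques n H" for I
  proof -
    have "mono_idx n 1 I \<subseteq> mono_idx n 1 {..<n}"
      using that unfolding max_cliques_def is_clique_def mono_idx_def by blast
    then show ?thesis
      unfolding loc_psd_1_one_poly using psd_on_subset[OF M finite_mono_idx_1] by blast
  qed
  moreover have "Im (Lfun y (g j)) = 0 \<and> 0 \<le> Re (Lfun y (g j))" if "j \<in> {1..m}" for j
    using dense that half_deg unfolding dense_feasible_def by (simp add: loc_psd_0)
  ultimately show ?thesis
    using dense unfolding cs_feasible_def dense_feasible_def Jprime by simp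
qed

lemma cs_feasible_moment_completion:
  assumes H: "chordal_extension n (csp_graph n f g m 1) H"
    and cs: "cs_feasible n f g m 1 H asg y"
  obtains A where "psd_on (mono_idx n 1 {..<n}) A"
    "\<forall>b\<in>mono_idx n 1 {..<n}. \<forall>c\<in>mono_idx n 1 {..<n}.
       b = c \<or> monomial_graph H b c \<longrightarrow> A b c = y (b, c)"
proof -
  have H_graph: "is_graph n H" and "chordal n H"
    using H unfolding chordal_extension_def by blast+
  have clique_psd: "psd_on K (\<lambda>b c. y (b, c))"
    if K: "K \<subseteq> mono_idx n 1 {..<n}" "clique (monomial_graph H) K" for K
  proof -
    obtain I where I: "I \<in> max_cliques n H" "K \<subseteq> mono_idx n 1 I"
      using monomial_clique_in_max_clique[OF H_graph K] by blast
    then have "loc_psd n 1 I one_poly y"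
      using cs unfolding cs_feasible_def by blast
    then show ?thesis
      using psd_on_subset[OF _ finite_mono_idx_1 I(2)] unfolding loc_psd_1_one_poly by blast
  qed
  show ?thesis
    using psd_completion_chordal[OF finite_mono_idx_1 symp_monomial_graph[OF H_graph]
        chordal_on_monomial_graph[OF H_graph \<open>chordal n H\<close>] clique_psd] that
    by blast
qed

lemma support_in_monomial_graph:
  assumes H: "chordal_extension n (csp_graph n f g m 1) H"
    and Jprime: "Jprime n g m 1 = {1..m}"
    and supp: "(b, c) \<in> psupp f \<union> (\<Union>j\<in>{1..m}. psupp (g j))"
    and bc: "b \<in> mono_idx n 1 {..<n}" "c \<in> mono_idx n 1 {..<n}"
  shows "b = c \<or> monomial_graph H b c"
proof (rule monomial_graph_if_support_edges[OF bc])
  fix i k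
  assume "i \<noteq> k" "i < n" "k < n" "{i, k} \<subseteq> msupp b \<union> msupp c"
  then have "csp_graph n f g m 1 i k"
    unfolding csp_graph_def Jprime using supp by blast
  then show "H i k"
    using H unfolding chordal_extension_def by blast
qed

lemma cs_feasible_imp_dense_feasible:
  assumes half_deg: "\<forall>j\<in>{1..m}. half_deg n (g j) = 1"
    and H: "chordal_extension n (csp_graph n f g m 1) H"
    and cs: "cs_feasible n f g m 1 H asg y"
  obtains y' where "dense_feasible n f g m 1 y'" "Lfun y' f = Lfun y f"
proof -
  define S where "S = mono_idx n 1 {..<n}"
  have Jprime: "Jprime n g m 1 = {1..m}"
    using half_deg unfolding Jprime_def by auto
  obtain A where A: "psd_on S A"
      "\<forall>b\<in>S. \<forall>c\<in>S. b = c \<or> monomial_graph H b c \<longrightarrow> A b c = y (b, c)"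
    using cs_feasible_moment_completion[OF H cs] unfolding S_def by blast
  define y' where "y' = (\<lambda>(b, c). if b \<in> S \<and> c \<in> S then A b c else y (b, c))"
  have agree: "Lfun y' p = Lfun y p" if p: "p = f \<or> p \<in> g ` {1..m}" for p
  proof (rule Lfun_cong_support)
    fix bc
    assume bc: "bc \<in> psupp p"
    obtain b c where bc_pair: "bc = (b, c)"
      by (cases bc)
    have "(b, c) \<in> psupp f \<union> (\<Union>j\<in>{1..m}. psupp (g j))"
      using p bc unfolding bc_pair by blast
    then have "b = c \<or> monomial_graph H b c" if "b \<in> S" "c \<in> S"
      using support_in_monomial_graph[OF H Jprime] that unfolding S_def by blast
    then show "y' bc = y bc"
      using A(2) unfolding y'_def bc_pair by auto
  qed
  have "dense_feasible n f g m 1 y'"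
    unfolding dense_feasible_def
  proof (intro conjI ballI)
    show "hermitian_seq y'"
      unfolding hermitian_seq_def
    proof (intro allI)
      fix b c
      have "y (b, c) = cnj (y (c, b))"
        using cs unfolding cs_feasible_def hermitian_seq_def by blast
      moreover have "A b c = cnj (A c b)" if "b \<in> S" "c \<in> S"
        using psd_on_hermitian[OF A(1) that] .
      ultimately show "y' (b, c) = cnj (y' (c, b))"
        unfolding y'_def by auto
    qed
    show "y' (zero_mi, zero_mi) = 1"
      using cs A(2) unfolding cs_feasible_def y'_def S_def mono_idx_1 by auto
    have "psd_on S (\<lambda>b c. y' (b, c))"
      using A(1) by (subst psd_on_cong[of S _ A]) (simp_all add: y'_def)
    then show "loc_psd n 1 {..<n} one_poly y'"
      unfolding loc_psd_1_one_poly S_def .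
    fix j
    assume "j \<in> {1..m}"
    then show "loc_psd n (1 - half_deg n (g j)) {..<n} (g j) y'"
      using cs half_deg agree[of "g j"] unfolding cs_feasible_def Jprime by (simp add: loc_psd_0)
  qed
  then show ?thesis
    using that agree by blast
qed

lemma cs_dense_objective_values_eq:
  assumes half_deg: "\<forall>j\<in>{1..m}. half_deg n (g j) = 1"
    and H: "chordal_extension n (csp_graph n f g m 1) H"
  shows "{ereal (Re (Lfun y f)) | y. cs_feasible n f g m 1 H asg y} =
    {ereal (Re (Lfun y f)) | y. dense_feasible n f g m 1 y}"
proof (intro set_eqI iffI)
  fix r
  assume "r \<in> {ereal (Re (Lfun y f)) | y. cs_feasible n f g m 1 H asg y}"
  then obtain y where r: "r = ereal (Re (Lfun y f))" and cs: "cs_feasible n f g m 1 H asg y"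
    by blast
  obtain y' where "dense_feasible n f g m 1 y'" "Lfun y' f = Lfun y f"
    by (rule cs_feasible_imp_dense_feasible[OF half_deg H cs])
  then show "r \<in> {ereal (Re (Lfun y f)) | y. dense_feasible n f g m 1 y}"
    unfolding r by (metis (mono_tags, lifting) mem_Collect_eq)
next
  fix r
  assume "r \<in> {ereal (Re (Lfun y f)) | y. dense_feasible n f g m 1 y}"
  then show "r \<in> {ereal (Re (Lfun y f)) | y. cs_feasible n f g m 1 H asg y}"
    using dense_feasible_imp_cs_feasible[OF half_deg] by blast
qed

theorem mainTheorem1:
  fixes n m :: nat and f :: cpoly and g :: "nat \<Rightarrow> cpoly"
    and H :: "nat \<Rightarrow> nat \<Rightarrow> bool" and asg :: "nat \<Rightarrow> nat set"
  assumes "is_cpoly n f" and "hermitian_poly f"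
    and "\<forall>j\<in>{1..m}. is_cpoly n (g j) \<and> hermitian_poly (g j)"
    and "pdeg n f \<le> 2"
    and "\<forall>j\<in>{1..m}. 1 \<le> pdeg n (g j) \<and> pdeg n (g j) \<le> 2"
    and "chordal_extension n (csp_graph n f g m 1) H"
    and "valid_assignment n g m 1 H asg"
  shows "rho_cs n f g m 1 H asg = rho_dense n f g m 1"
proof -
  \<comment> \<open>The degree bounds make \<open>J' = [m]\<close>.\<close>
  have "\<forall>j\<in>{1..m}. half_deg n (g j) = 1"
    using assms(5) half_deg_eq_1 by blast
  then show ?thesis
    unfolding rho_cs_def rho_dense_def
    using cs_dense_objective_values_eq[OF _ assms(6)] by simp
qed

end
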